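(* Let $m(x,\xi)$ be a complex linear form on $\mathbf{C}^{2n}$ and consider the complex phase space translation $\exp(H_m)(\rho) = \rho + H_m$, $\rho \in \mathbf{C}^{2n}$. Let $\Phi$ be a strictly plurisubharmonic quadratic form on $\mathbf{C}^n$. Then $\exp(H_m)(\Lambda_{\Phi}) = \Lambda_{\Psi}$, where $\Psi$ is the strictly plurisubharmonic quadratic polynomial on $\mathbf{C}^n$ given by $$\Psi(x) = \Phi(x) + \mathrm{Im}\, \left(m\left(x,\frac{2}{i}\frac{\partial \Phi}{\partial x}(x)\right)\right),\quad x \in \mathbf{C}^n.$$
   Context: For a complex linear form $m(x,\xi)=m'_x\cdot x+m'_\xi\cdot\xi$ on $\mathbf{C}^{2n}$, its Hamilton vector field is the constant vector $H_m=(m'_\xi,-m'_x)\in\mathbf{C}^{2n}$. For a real-valued polynomial $\Phi$ on $\mathbf{C}^n$, $\Lambda_{\Phi} = \{(x,\frac{2}{i}\frac{\partial \Phi}{\partial x}(x)) : x\in \mathbf{C}^n\}\subset\mathbf{C}^{2n}$, with $\partial/\partial x$ the holomorphic derivative. *)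

theory Defs
  imports "HOL-Analysis.Analysis"
begin

text \<open>C^n is modelled as complex^'n (n = CARD('n)); C^{2n} as pairs (x, xi).\<close>

definition cdot :: "complex^'n \<Rightarrow> complex^'n \<Rightarrow> complex" where
  "cdot a x = (\<Sum>j\<in>UNIV. a$j * x$j)"

definition wirt_dz :: "'n \<Rightarrow> (complex^'n \<Rightarrow> complex) \<Rightarrow> complex^'n \<Rightarrow> complex" where
  "wirt_dz j f x = (frechet_derivative f (at x) (axis j 1)
                    - \<i> * frechet_derivative f (at x) (axis j \<i>)) / 2"

definition wirt_dzbar :: "'n \<Rightarrow> (complex^'n \<Rightarrow> complex) \<Rightarrow> complex^'n \<Rightarrow> complex" where
  "wirt_dzbar j f x = (frechet_derivative f (at x) (axis j 1)
                    + \<i> * frechet_derivative f (at x) (axis j \<i>)) / 2"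

definition holo_grad :: "(complex^'n \<Rightarrow> real) \<Rightarrow> complex^'n \<Rightarrow> complex^'n" where
  "holo_grad \<Phi> x = (\<chi> j. wirt_dz j (\<lambda>y. complex_of_real (\<Phi> y)) x)"

definition Lambda :: "(complex^'n \<Rightarrow> real) \<Rightarrow> ((complex^'n) \<times> (complex^'n)) set" where
  "Lambda \<Phi> = {(x, \<chi> j. (2 / \<i>) * holo_grad \<Phi> x $ j) | x. True}"

definition real_quadratic_form :: "(complex^'n \<Rightarrow> real) \<Rightarrow> bool" where
  "real_quadratic_form \<Phi> \<longleftrightarrow>
     (\<exists>B :: complex^'n \<Rightarrow> complex^'n \<Rightarrow> real. bounded_bilinear B \<and> (\<forall>x. \<Phi> x = B x x))"

definition real_quadratic_poly :: "(complex^'n \<Rightarrow> real) \<Rightarrow> bool" where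
  "real_quadratic_poly \<Psi> \<longleftrightarrow>
     (\<exists>Q L c. real_quadratic_form Q \<and> linear (L :: complex^'n \<Rightarrow> real)
             \<and> (\<forall>x. \<Psi> x = Q x + L x + c))"

definition strictly_psh :: "(complex^'n \<Rightarrow> real) \<Rightarrow> bool" where
  "strictly_psh \<Phi> \<longleftrightarrow>
     (\<forall>x t. t \<noteq> 0 \<longrightarrow>
        0 < Re (\<Sum>j\<in>UNIV. \<Sum>k\<in>UNIV.
               wirt_dz j (wirt_dzbar k (\<lambda>y. complex_of_real (\<Phi> y))) x * t$j * cnj (t$k)))"

end

theory Submission
  imports Defs
begin

text \<open>Since \<open>\<Phi>\<close> is quadratic, \<open>\<Phi> x - \<Phi>'(x) b = \<Phi> (x - b) - \<Phi> b\<close>, while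
  \<open>Im (b \<cdot> (2/\<i>) \<partial>\<^sub>x\<Phi>(x)) = - \<Phi>'(x) b\<close>. Hence \<open>\<Psi> x = \<Phi> (x - b) + Im (a \<cdot> x) - \<Phi> b\<close>:
  a translate of \<open>\<Phi>\<close> plus a real-linear, hence pluriharmonic, function plus a constant.
  The translation moves the base point of \<open>\<Lambda>\<close> by \<open>b\<close>, the term \<open>Im (a \<cdot> x)\<close> moves the fibre
  by \<open>- a\<close>, the constant is invisible to derivatives, and none of the three changes the Levi
  form up to the shift of the base point.\<close>

lemma has_derivative_shift_iff:
  "((\<lambda>y. f (y - c)) has_derivative D) (at x) \<longleftrightarrow> (f has_derivative D) (at (x - c))"
proof
  assume "((\<lambda>y. f (y - c)) has_derivative D) (at x)"
  then have "((\<lambda>y. f (y - c)) \<circ> (\<lambda>z. z + c) has_derivative D \<circ> (\<lambda>h. h)) (at (x - c))"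
    by (intro diff_chain_at) (auto intro!: derivative_eq_intros)
  then show "(f has_derivative D) (at (x - c))" by (simp add: o_def)
next
  assume "(f has_derivative D) (at (x - c))"
  then have "(f \<circ> (\<lambda>y. y - c) has_derivative D \<circ> (\<lambda>h. h)) (at x)"
    by (intro diff_chain_at) (auto intro!: derivative_eq_intros)
  then show "((\<lambda>y. f (y - c)) has_derivative D) (at x)" by (simp add: o_def)
qed

lemma differentiable_shift_iff:
  "(\<lambda>y. f (y - c)) differentiable (at x) \<longleftrightarrow> f differentiable (at (x - c))"
  by (simp add: differentiable_def has_derivative_shift_iff)

lemma frechet_derivative_shift:
  "frechet_derivative (\<lambda>y. f (y - c)) (at x) = frechet_derivative f (at (x - c))"
  by (simp add: frechet_derivative_def has_derivative_shift_iff)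

lemma has_derivative_add_const_iff:
  "((\<lambda>y. f y + c) has_derivative D) F \<longleftrightarrow> (f has_derivative D) F"
  using has_derivative_add_const[of "\<lambda>y. f y + c" D F "- c"] has_derivative_add_const by auto

lemma frechet_derivative_add_const:
  "frechet_derivative (\<lambda>y. f y + c) F = frechet_derivative f F"
  by (simp add: frechet_derivative_def has_derivative_add_const_iff)

lemma frechet_derivative_add:
  assumes "f differentiable (at x)" "g differentiable (at x)"
  shows "frechet_derivative (\<lambda>y. f y + g y) (at x)
           = (\<lambda>h. frechet_derivative f (at x) h + frechet_derivative g (at x) h)"
  using has_derivative_add[OF assms[THEN frechet_derivative_works[THEN iffD1]]]
  by (rule frechet_derivative_at[symmetric])

lemma differentiable_of_real:
  "f differentiable F \<Longrightarrow> (\<lambda>y. of_real (f y) :: 'a :: real_normed_algebra_1) differentiable F"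
  unfolding differentiable_def by (blast intro: has_derivative_of_real)

lemma wirt_dz_at:
  "(f has_derivative F) (at x) \<Longrightarrow> wirt_dz j f x = (F (axis j 1) - \<i> * F (axis j \<i>)) / 2"
  by (simp add: wirt_dz_def frechet_derivative_at[symmetric])

lemma wirt_dzbar_at:
  "(f has_derivative F) (at x) \<Longrightarrow> wirt_dzbar j f x = (F (axis j 1) + \<i> * F (axis j \<i>)) / 2"
  by (simp add: wirt_dzbar_def frechet_derivative_at[symmetric])

lemma wirt_dz_shift: "wirt_dz j (\<lambda>y. f (y - c)) x = wirt_dz j f (x - c)"
  by (simp add: wirt_dz_def frechet_derivative_shift)

lemma wirt_dzbar_shift: "wirt_dzbar j (\<lambda>y. f (y - c)) x = wirt_dzbar j f (x - c)"
  by (simp add: wirt_dzbar_def frechet_derivative_shift)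

lemma wirt_dz_add_const: "wirt_dz j (\<lambda>y. f y + c) = wirt_dz j f"
  by (simp add: wirt_dz_def frechet_derivative_add_const fun_eq_iff)

lemma wirt_dzbar_add_const: "wirt_dzbar j (\<lambda>y. f y + c) = wirt_dzbar j f"
  by (simp add: wirt_dzbar_def frechet_derivative_add_const fun_eq_iff)

lemma wirt_dz_add:
  "f differentiable (at x) \<Longrightarrow> g differentiable (at x) \<Longrightarrow>
     wirt_dz j (\<lambda>y. f y + g y) x = wirt_dz j f x + wirt_dz j g x"
  by (simp add: wirt_dz_def frechet_derivative_add field_simps)

lemma wirt_dzbar_add:
  "f differentiable (at x) \<Longrightarrow> g differentiable (at x) \<Longrightarrow>
     wirt_dzbar j (\<lambda>y. f y + g y) x = wirt_dzbar j f x + wirt_dzbar j g x"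
  by (simp add: wirt_dzbar_def frechet_derivative_add field_simps)

lemma wirt_dzbar_bounded_linear:
  "bounded_linear f \<Longrightarrow> wirt_dzbar j f = (\<lambda>_. (f (axis j 1) + \<i> * f (axis j \<i>)) / 2)"
  by (rule ext) (rule wirt_dzbar_at[OF bounded_linear_imp_has_derivative])

lemma complex_vec_expansion:
  "(x :: complex^'n) = (\<Sum>j\<in>UNIV. Re (x$j) *\<^sub>R axis j 1 + Im (x$j) *\<^sub>R axis j \<i>)"
  by (simp add: vec_eq_iff axis_def sum.distrib complex_eq_iff
      if_distrib[of Re] if_distrib[of Im] if_distrib[of "(*) _"] cong: if_cong)

lemma linear_complex_vec_expansion:
  assumes "linear f"
  shows "f (x :: complex^'n) = (\<Sum>j\<in>UNIV. Re (x$j) *\<^sub>R f (axis j 1) + Im (x$j) *\<^sub>R f (axis j \<i>))"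
  by (subst complex_vec_expansion)
    (simp add: linear_sum[OF assms] linear_add[OF assms] linear_scale[OF assms])

lemma linear_Im_cdot: "linear (\<lambda>x. Im (cdot a x))"
  by (rule linearI) (auto simp: cdot_def sum.distrib algebra_simps sum_distrib_left Im_sum)

lemma cdot_axis: "cdot a (axis j c) = a$j * c"
  by (simp add: cdot_def axis_def if_distrib[of "(*) _"] cong: if_cong)

definition Lambda_fibre :: "(complex^'n \<Rightarrow> real) \<Rightarrow> complex^'n \<Rightarrow> complex^'n" where
  "Lambda_fibre \<Phi> x = (\<chi> j. (2 / \<i>) * holo_grad \<Phi> x $ j)"

lemma Lambda_eq: "Lambda \<Phi> = range (\<lambda>x. (x, Lambda_fibre \<Phi> x))"
  by (auto simp: Lambda_def Lambda_fibre_def)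

lemma Lambda_fibre_at:
  assumes "(f has_derivative F) (at x)"
  shows "Lambda_fibre f x = (\<chi> j. - (\<i> * of_real (F (axis j 1))) - of_real (F (axis j \<i>)))"
  by (simp add: Lambda_fibre_def holo_grad_def wirt_dz_at[OF has_derivative_of_real[OF assms]]
      vec_eq_iff complex_eq_iff)

lemma Lambda_fibre_shift: "Lambda_fibre (\<lambda>y. f (y - c)) x = Lambda_fibre f (x - c)"
  using wirt_dz_shift[of _ "\<lambda>y. complex_of_real (f y)"]
  by (simp add: Lambda_fibre_def holo_grad_def)

lemma Lambda_fibre_add_const: "Lambda_fibre (\<lambda>y. f y + c) = Lambda_fibre f"
  using wirt_dz_add_const[of _ "\<lambda>y. complex_of_real (f y)"]
  by (simp add: Lambda_fibre_def holo_grad_def fun_eq_iff)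

lemma Lambda_fibre_add:
  assumes "f differentiable (at x)" "g differentiable (at x)"
  shows "Lambda_fibre (\<lambda>y. f y + g y) x = Lambda_fibre f x + Lambda_fibre g x"
  using wirt_dz_add[OF assms[THEN differentiable_of_real]]
  by (simp add: Lambda_fibre_def holo_grad_def vec_eq_iff ring_distribs)

lemma Lambda_fibre_Im_cdot: "Lambda_fibre (\<lambda>y. Im (cdot a y)) x = - a"
proof -
  have "((\<lambda>y. Im (cdot a y)) has_derivative (\<lambda>y. Im (cdot a y))) (at x)"
    using linear_Im_cdot[of a, unfolded linear_conv_bounded_linear]
    by (rule bounded_linear_imp_has_derivative)
  then show ?thesis
    by (simp add: Lambda_fibre_at cdot_axis vec_eq_iff complex_eq_iff)
qed

lemma Im_cdot_Lambda_fibre: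
  assumes "f differentiable (at x)"
  shows "Im (cdot b (Lambda_fibre f x)) = - frechet_derivative f (at x) b"
proof -
  let ?F = "frechet_derivative f (at x)"
  have "Im (cdot b (Lambda_fibre f x))
      = - (\<Sum>j\<in>UNIV. Re (b$j) * ?F (axis j 1) + Im (b$j) * ?F (axis j \<i>))"
    using assms[unfolded frechet_derivative_works]
    by (simp add: Lambda_fibre_at cdot_def Im_sum flip: sum_negf)
  also have "\<dots> = - ?F b"
    using linear_complex_vec_expansion[OF linear_frechet_derivative[OF assms], of b] by simp
  finally show ?thesis .
qed

lemma translate_Lambda:
  assumes "\<And>x. Lambda_fibre \<Psi> x = Lambda_fibre \<Phi> (x - b) - a"
  shows "(\<lambda>\<rho>. \<rho> + (b, - a)) ` Lambda \<Phi> = Lambda \<Psi>"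
proof -
  have "(\<lambda>\<rho>. \<rho> + (b, - a)) ` Lambda \<Phi> = (\<lambda>y. (y, Lambda_fibre \<Psi> y)) ` range (\<lambda>x. x + b)"
    unfolding Lambda_eq image_image by (simp add: assms)
  then show ?thesis
    by (simp add: Lambda_eq)
qed

lemma strictly_psh_shift:
  assumes "strictly_psh f"
  shows "strictly_psh (\<lambda>x. f (x - c))"
proof -
  have "wirt_dz j (wirt_dzbar k (\<lambda>y. complex_of_real (f (y - c)))) x
      = wirt_dz j (wirt_dzbar k (\<lambda>y. complex_of_real (f y))) (x - c)" for j k x
  proof -
    have "wirt_dzbar k (\<lambda>y. complex_of_real (f (y - c)))
        = (\<lambda>y. wirt_dzbar k (\<lambda>y. complex_of_real (f y)) (y - c))"
      by (rule ext) (rule wirt_dzbar_shift)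
    then show ?thesis by (simp add: wirt_dz_shift)
  qed
  then show ?thesis
    using assms by (simp add: strictly_psh_def)
qed

lemma strictly_psh_add_const: "strictly_psh (\<lambda>x. f x + c) \<longleftrightarrow> strictly_psh f"
  by (simp add: strictly_psh_def wirt_dzbar_add_const)

lemma strictly_psh_add_linear:
  assumes "\<And>x. f differentiable (at x)" and "linear l"
  shows "strictly_psh (\<lambda>x. f x + l x) \<longleftrightarrow> strictly_psh f"
proof -
  let ?g = "\<lambda>y. complex_of_real (f y)" and ?h = "\<lambda>y. complex_of_real (l y)"
  have h: "bounded_linear ?h"
    using assms(2) by (simp add: linear_conv_bounded_linear bounded_linear_compose[OF bounded_linear_of_real])
  have "wirt_dzbar k (\<lambda>y. ?g y + ?h y) = (\<lambda>y. wirt_dzbar k ?g y + wirt_dzbar k ?h 0)" for k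
  proof
    fix y
    have "?h differentiable (at y)"
      using h by (rule bounded_linear_imp_differentiable)
    then show "wirt_dzbar k (\<lambda>y. ?g y + ?h y) y = wirt_dzbar k ?g y + wirt_dzbar k ?h 0"
      using wirt_dzbar_add[OF differentiable_of_real[OF assms(1)]] wirt_dzbar_bounded_linear[OF h]
      by simp
  qed
  then show ?thesis
    by (simp add: strictly_psh_def wirt_dz_add_const)
qed

lemma differentiable_Im_cdot: "(\<lambda>y. Im (cdot a y)) differentiable (at x)"
  using linear_Im_cdot[unfolded linear_conv_bounded_linear] by (rule bounded_linear_imp_differentiable)

lemma Lambda_fibre_shift_add_Im_cdot:
  assumes "\<And>x. \<Phi> differentiable (at x)"
  shows "Lambda_fibre (\<lambda>x. \<Phi> (x - b) + Im (cdot a x) - k) x = Lambda_fibre \<Phi> (x - b) - a"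
proof -
  have "(\<lambda>y. \<Phi> (y - b)) differentiable (at x)"
    using assms by (simp add: differentiable_shift_iff)
  from Lambda_fibre_add[OF this differentiable_Im_cdot]
  show ?thesis
    using Lambda_fibre_add_const[of "\<lambda>x. \<Phi> (x - b) + Im (cdot a x)" "- k"]
    by (simp add: Lambda_fibre_shift Lambda_fibre_Im_cdot)
qed

lemma strictly_psh_shift_add_Im_cdot:
  assumes "\<And>x. \<Phi> differentiable (at x)" and "strictly_psh \<Phi>"
  shows "strictly_psh (\<lambda>x. \<Phi> (x - b) + Im (cdot a x) - k)"
proof -
  have "(\<lambda>y. \<Phi> (y - b)) differentiable (at x)" for x
    using assms(1) by (simp add: differentiable_shift_iff)
  from strictly_psh_add_linear[OF this linear_Im_cdot]
  show ?thesis
    using strictly_psh_shift[OF assms(2), of b]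
      strictly_psh_add_const[of "\<lambda>x. \<Phi> (x - b) + Im (cdot a x)" "- k"]
    by simp
qed

lemma bounded_bilinear_diagonal_has_derivative:
  assumes "bounded_bilinear B"
  shows "((\<lambda>x. B x x) has_derivative (\<lambda>h. B x h + B h x)) (at x)"
  using bounded_bilinear.FDERIV[OF assms has_derivative_ident has_derivative_ident, of x UNIV]
  by (simp add: add.commute)

lemma real_quadratic_form_differentiable:
  assumes "real_quadratic_form \<Phi>"
  shows "\<Phi> differentiable (at x)"
proof -
  obtain B where B: "bounded_bilinear B" and "\<Phi> = (\<lambda>x. B x x)"
    using assms unfolding real_quadratic_form_def by fast
  then show ?thesis
    unfolding differentiable_def by (blast intro: bounded_bilinear_diagonal_has_derivative)
qed

lemma real_quadratic_form_shift:
  assumes "real_quadratic_form \<Phi>"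
  shows "\<Phi> x - frechet_derivative \<Phi> (at x) c = \<Phi> (x - c) - \<Phi> c"
proof -
  obtain B where B: "bounded_bilinear B" and \<Phi>: "\<Phi> = (\<lambda>x. B x x)"
    using assms unfolding real_quadratic_form_def by fast
  interpret B: bounded_bilinear B by (rule B)
  show ?thesis
    using frechet_derivative_at[OF bounded_bilinear_diagonal_has_derivative[OF B, of x], symmetric]
    by (simp add: \<Phi> B.diff_left B.diff_right)
qed

lemma real_quadratic_form_imp_poly: "real_quadratic_form Q \<Longrightarrow> real_quadratic_poly Q"
  unfolding real_quadratic_poly_def
  by (intro exI[of _ Q] exI[of _ "\<lambda>_. 0"] exI[of _ 0]) (simp add: linear_zero)

lemma real_quadratic_poly_add_affine:
  assumes "real_quadratic_poly f" and "linear l"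
  shows "real_quadratic_poly (\<lambda>x. f x + l x + k)"
proof -
  obtain Q L c where "real_quadratic_form Q" "linear L" "\<And>x. f x = Q x + L x + c"
    using assms(1) unfolding real_quadratic_poly_def by blast
  moreover have "linear (\<lambda>x. L x + l x)"
    using \<open>linear L\<close> assms(2) by (rule linear_compose_add)
  ultimately show ?thesis
    unfolding real_quadratic_poly_def
    by (intro exI[of _ Q] exI[of _ "\<lambda>x. L x + l x"] exI[of _ "c + k"]) auto
qed

lemma real_quadratic_poly_shift:
  assumes "real_quadratic_poly f"
  shows "real_quadratic_poly (\<lambda>x. f (x - c))"
proof -
  obtain Q L k where Q: "real_quadratic_form Q" and L: "linear L" and f: "\<And>x. f x = Q x + L x + k"
    using assms unfolding real_quadratic_poly_def by blast
  obtain B where B: "bounded_bilinear B" and QB: "\<And>x. Q x = B x x"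
    using Q unfolding real_quadratic_form_def by blast
  interpret B: bounded_bilinear B by (rule B)
  have "linear (\<lambda>x. L x - B x c - B c x)"
    using L B.bounded_linear_left B.bounded_linear_right
    by (intro linear_compose_sub) (auto dest: bounded_linear.linear)
  then have "real_quadratic_poly (\<lambda>x. Q x + (L x - B x c - B c x) + (B c c - L c + k))"
    by (rule real_quadratic_poly_add_affine[OF real_quadratic_form_imp_poly[OF Q]])
  moreover have "f (x - c) = Q x + (L x - B x c - B c x) + (B c c - L c + k)" for x
    by (simp add: f QB B.diff_left B.diff_right linear_diff[OF L])
  ultimately show ?thesis by simp
qed

theorem lemma2p2:
  fixes \<Phi> :: "complex^'n \<Rightarrow> real" and a b :: "complex^'n"
  assumes "real_quadratic_form \<Phi>" and "strictly_psh \<Phi>"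
  shows "(let m = (\<lambda>x \<xi>. cdot a x + cdot b \<xi>);
              H\<^sub>m = (b, - a);
              \<Psi> = (\<lambda>x. \<Phi> x + Im (m x (\<chi> j. (2 / \<i>) * holo_grad \<Phi> x $ j)))
          in (\<lambda>\<rho>. \<rho> + H\<^sub>m) ` Lambda \<Phi> = Lambda \<Psi>
             \<and> strictly_psh \<Psi> \<and> real_quadratic_poly \<Psi>)"
proof -
  define \<Psi> where "\<Psi> x = \<Phi> (x - b) + Im (cdot a x) - \<Phi> b" for x
  have \<Phi>_diff: "\<Phi> differentiable (at x)" for x
    using assms(1) by (rule real_quadratic_form_differentiable)
  have \<Psi>_eq: "(\<lambda>x. \<Phi> x + Im (cdot a x + cdot b (Lambda_fibre \<Phi> x))) = \<Psi>"
    using real_quadratic_form_shift[OF assms(1)]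
    by (simp add: fun_eq_iff \<Psi>_def Im_cdot_Lambda_fibre[OF \<Phi>_diff] algebra_simps)
  have "(\<lambda>\<rho>. \<rho> + (b, - a)) ` Lambda \<Phi> = Lambda \<Psi>"
    using Lambda_fibre_shift_add_Im_cdot[OF \<Phi>_diff] unfolding \<Psi>_def[abs_def]
    by (rule translate_Lambda)
  moreover have "strictly_psh \<Psi>"
    using strictly_psh_shift_add_Im_cdot[OF \<Phi>_diff assms(2)] by (simp add: \<Psi>_def[abs_def])
  moreover have "real_quadratic_poly \<Psi>"
    using real_quadratic_poly_add_affine[OF
        real_quadratic_poly_shift[OF real_quadratic_form_imp_poly[OF assms(1)]] linear_Im_cdot,
        where k = "- \<Phi> b"]
    by (simp add: \<Psi>_def[abs_def])
  ultimately show ?thesis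
    unfolding Let_def Lambda_fibre_def[symmetric] \<Psi>_eq by blast
qed

end
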